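(* Let $G=(V,E)$ be an infinite, connected, non-amenable graph with all degrees bounded by $\Delta<\infty$, and consider the branching random walk $(Z^x_a)_{a\in T}$ on $G$ started at $x$ described below. There is $u_0>0$ such that for every $x\in V$ and every $u<u_0$, \[ \lim_{y:\,d(x,y)\to\infty}\mathbf P_u[\exists a\in T: Z^x_a=y]=0. \]
   Context: $d(\cdot,\cdot)$ is graph distance; non-amenable means $\inf\{|\partial_VK|/|K|:0<|K|<\infty\}>0$ where $\partial_VK$ is the set of vertices outside $K$ adjacent to $K$. Branching random walk under $\mathbf P_u$: a two-type Galton–Watson forest $\mathcal T$ with vertex set $T$ and types $\circ$, $\bullet$. Generation $0$ consists of a Poisson$(u\Delta^2)$ number of type-$\circ$ individuals. Independently, each $\circ$-individual has exactly $2$ children of type $\bullet$ and a Poisson$(u\Delta^2)$ number of children of type $\circ$; each $\bullet$-individual has exactly $1$ child of type $\bullet$ and a Poisson$(u\Delta^2)$ number of children of type $\circ$. Positions: $Z^x_a=x$ for every $a$ in generation $0$, and each child is placed at a uniformly chosen neighbour of its parent's position, independently over all parent–child edges. *)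

theory Defs
  imports "HOL-Probability.Probability"
begin

text \<open>A graph on the vertex type 'v is given by a symmetric adjacency relation E.\<close>

definition nbrs :: "('v \<Rightarrow> 'v \<Rightarrow> bool) \<Rightarrow> 'v \<Rightarrow> 'v set" where
  "nbrs E v = {w. E v w}"

text \<open>A walk of length n from x to y: a list of n+1 vertices, consecutive ones adjacent.\<close>
definition is_walk :: "('v \<Rightarrow> 'v \<Rightarrow> bool) \<Rightarrow> 'v list \<Rightarrow> bool" where
  "is_walk E p \<longleftrightarrow> p \<noteq> [] \<and> (\<forall>i < length p - 1. E (p ! i) (p ! Suc i))"

definition connected_graph :: "('v \<Rightarrow> 'v \<Rightarrow> bool) \<Rightarrow> bool" where
  "connected_graph E \<longleftrightarrow> (\<forall>x y. \<exists>p. is_walk E p \<and> hd p = x \<and> last p = y)"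

definition gdist :: "('v \<Rightarrow> 'v \<Rightarrow> bool) \<Rightarrow> 'v \<Rightarrow> 'v \<Rightarrow> nat" where
  "gdist E x y = (LEAST n. \<exists>p. is_walk E p \<and> hd p = x \<and> last p = y \<and> length p = Suc n)"

definition vboundary :: "('v \<Rightarrow> 'v \<Rightarrow> bool) \<Rightarrow> 'v set \<Rightarrow> 'v set" where
  "vboundary E K = {w. w \<notin> K \<and> (\<exists>v\<in>K. E v w)}"

definition non_amenable :: "('v \<Rightarrow> 'v \<Rightarrow> bool) \<Rightarrow> bool" where
  "non_amenable E \<longleftrightarrow>
     (INF K \<in> {K. finite K \<and> K \<noteq> {}}. real (card (vboundary E K)) / real (card K)) > 0"

datatype ptype = Circ | Bullet

text \<open>Individual of given type at a position, with its list of children subtrees.\<close>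
datatype 'v btree = Nd ptype 'v "'v btree list"

fun seq_pmf :: "'a pmf list \<Rightarrow> 'a list pmf" where
  "seq_pmf [] = return_pmf []"
| "seq_pmf (p # ps) = do { x \<leftarrow> p; xs \<leftarrow> seq_pmf ps; return_pmf (x # xs) }"

fun n_bullet :: "ptype \<Rightarrow> nat" where
  "n_bullet Circ = 2"
| "n_bullet Bullet = 1"

text \<open>Law of the subtree (truncated after n further generations) of an individual of type t
  at position v; rate is u*Delta^2.\<close>
primrec bgen :: "('v \<Rightarrow> 'v \<Rightarrow> bool) \<Rightarrow> real \<Rightarrow> nat \<Rightarrow> ptype \<Rightarrow> 'v \<Rightarrow> 'v btree pmf" where
  "bgen E r 0 t v = return_pmf (Nd t v [])"
| "bgen E r (Suc n) t v = do {
      k \<leftarrow> poisson_pmf r;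
      cs \<leftarrow> seq_pmf (map (\<lambda>s. do { w \<leftarrow> pmf_of_set (nbrs E v); bgen E r n s w })
                          (replicate (n_bullet t) Bullet @ replicate k Circ));
      return_pmf (Nd t v cs) }"

definition bforest :: "('v \<Rightarrow> 'v \<Rightarrow> bool) \<Rightarrow> real \<Rightarrow> nat \<Rightarrow> 'v \<Rightarrow> 'v btree list pmf" where
  "bforest E r n x = do { k \<leftarrow> poisson_pmf r; seq_pmf (replicate k (bgen E r n Circ x)) }"

fun visits :: "'v \<Rightarrow> 'v btree \<Rightarrow> bool" where
  "visits y (Nd t v cs) \<longleftrightarrow> v = y \<or> (\<exists>c\<in>set cs. visits y c)"

text \<open>P_u[exists a in T: Z^x_a = y], as the increasing limit over generations.\<close>
definition hit_prob :: "('v \<Rightarrow> 'v \<Rightarrow> bool) \<Rightarrow> nat \<Rightarrow> real \<Rightarrow> 'v \<Rightarrow> 'v \<Rightarrow> real" where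
  "hit_prob E \<Delta> u x y =
     (SUP n. measure_pmf.prob (bforest E (u * real \<Delta> ^ 2) n x) {F. \<exists>c\<in>set F. visits y c})"

end

theory Submission
  imports Defs "HOL-Analysis.Analysis"
begin

(* Non-amenability gives, through a co-area argument and Cheeger's inequality, a spectral gap
   for the lazy random walk: its degree-weighted l2 norm contracts by a factor \<rho> < 1 per step.
   Comparing the simple walk with the lazy walk via the binomial expansion of (I + P)/2 then gives
   p_n(x,y) \<le> (2n+1) \<rho>^n \<Delta>.  The first moment of the branching random walk with Poisson rate
   r = u\<Delta>^2 is dominated by 3r \<Sum>_k (1 + 3r)^k p_k(x,y); for small u this is a convergent series,
   and since p_k(x,y) = 0 for k < d(x,y), it is a tail of that series.  Markov's inequality turns
   the first moment into a bound on the hitting probability. *)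

definition lin_geom :: "real \<Rightarrow> nat \<Rightarrow> real" where
  "lin_geom \<theta> k = real (2 * k + 1) * \<theta> ^ k"

lemma summable_lin_geom:
  assumes "0 \<le> \<theta>" "\<theta> < 1"
  shows "summable (lin_geom \<theta>)"
proof (rule summable_comparison_test')
  have "summable (\<lambda>k. of_nat (Suc k) * \<theta> ^ k)"
    using geometric_deriv_sums[of \<theta>] assms by (auto simp: sums_iff)
  then show "summable (\<lambda>k. 2 * (of_nat (Suc k) * \<theta> ^ k))"
    by (rule summable_mult)
  show "norm (lin_geom \<theta> k) \<le> 2 * (of_nat (Suc k) * \<theta> ^ k)" for k
  proof -
    have "real (2 * k + 1) * \<theta> ^ k \<le> real (2 * Suc k) * \<theta> ^ k"
      using assms by (intro mult_right_mono) auto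
    then show ?thesis using assms by (simp add: lin_geom_def algebra_simps)
  qed
qed

lemma sum_le_suminf_shift:
  fixes g :: "nat \<Rightarrow> real"
  assumes "summable g" "\<And>k. 0 \<le> g k"
  shows "(\<Sum>k = d..n. g k) \<le> (\<Sum>i. g (i + d))"
proof (cases "d \<le> n")
  case True
  have "(\<Sum>k = d..n. g k) = (\<Sum>i = 0..n - d. g (i + d))"
    using sum.shift_bounds_cl_nat_ivl[of g 0 d "n - d"] True by simp
  also have "\<dots> \<le> (\<Sum>i. g (i + d))"
    using summable_ignore_initial_segment[OF assms(1)] assms(2) by (intro sum_le_suminf) auto
  finally show ?thesis .
next
  case False
  then show ?thesis
    using summable_ignore_initial_segment[OF assms(1)] assms(2) by (simp add: suminf_nonneg)
qed

lemma four_pow_le_central_binomial: "4 ^ n \<le> real (2 * n + 1) * real ((2 * n) choose n)"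
proof (cases "n = 0")
  case False
  then have "4 ^ n \<le> (2 * real n) * real ((2 * n) choose n)"
    using central_binomial_lower_bound[of n] by (simp add: divide_le_eq mult.commute)
  also have "\<dots> \<le> real (2 * n + 1) * real ((2 * n) choose n)"
    by (intro mult_right_mono) auto
  finally show ?thesis .
qed simp

lemma spectral_gap_of_sq_bound:
  fixes h D N Q :: real
  assumes "(h * N / D)\<^sup>2 \<le> (2 * N - 2 * Q) * (4 * N)" "Q \<le> N" "0 \<le> N"
  shows "Q \<le> (1 - h\<^sup>2 / (8 * D\<^sup>2)) * N"
proof (cases "N = 0")
  case False
  then have "0 < N" using assms(3) by simp
  have "N * (h\<^sup>2 / D\<^sup>2 * N) = (h * N / D)\<^sup>2"
    by (simp add: power_divide power_mult_distrib power2_eq_square)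
  also have "\<dots> \<le> (2 * N - 2 * Q) * (4 * N)"
    by (rule assms(1))
  also have "\<dots> = N * (8 * (N - Q))"
    by (simp add: algebra_simps)
  finally have "N * (h\<^sup>2 / D\<^sup>2 * N) \<le> N * (8 * (N - Q))" .
  then have "h\<^sup>2 / D\<^sup>2 * N \<le> 8 * (N - Q)"
    using \<open>0 < N\<close> by (rule mult_left_le_imp_le)
  moreover have "h\<^sup>2 / D\<^sup>2 * N = 8 * (h\<^sup>2 / (8 * D\<^sup>2) * N)"
    by simp
  ultimately show ?thesis by (simp add: algebra_simps)
qed (use assms in simp)

section \<open>Bounded degree graphs\<close>

locale bounded_degree_graph =
  fixes E :: "'v \<Rightarrow> 'v \<Rightarrow> bool" and \<Delta> :: nat
  assumes sym: "\<And>v w. E v w \<Longrightarrow> E w v"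
    and finite_nbrs: "\<And>v. finite (nbrs E v)"
    and card_nbrs_le: "\<And>v. card (nbrs E v) \<le> \<Delta>"
    and nbrs_nonempty: "\<And>v. nbrs E v \<noteq> {}"
begin

definition vdeg :: "'v \<Rightarrow> real" where
  "vdeg v = real (card (nbrs E v))"

definition nbr_avg :: "('v \<Rightarrow> real) \<Rightarrow> 'v \<Rightarrow> real" where
  "nbr_avg f v = (\<Sum>w\<in>nbrs E v. f w) / vdeg v"

definition lazy_avg :: "('v \<Rightarrow> real) \<Rightarrow> 'v \<Rightarrow> real" where
  "lazy_avg f v = (f v + nbr_avg f v) / 2"

definition walk_prob :: "nat \<Rightarrow> 'v \<Rightarrow> 'v \<Rightarrow> real" where
  "walk_prob k x y = (nbr_avg ^^ k) (indicator {y}) x"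

definition dnorm :: "'v set \<Rightarrow> ('v \<Rightarrow> real) \<Rightarrow> real" where
  "dnorm S f = (\<Sum>v\<in>S. vdeg v * (f v)\<^sup>2)"

definition adj_form :: "'v set \<Rightarrow> ('v \<Rightarrow> real) \<Rightarrow> real" where
  "adj_form S f = (\<Sum>v\<in>S. f v * (\<Sum>w\<in>nbrs E v. f w))"

definition nbhd :: "'v set \<Rightarrow> 'v set" where
  "nbhd S = S \<union> (\<Union>v\<in>S. nbrs E v)"

definition edges_at :: "'v set \<Rightarrow> ('v \<times> 'v) set" where
  "edges_at S = {(v, w). E v w \<and> (v \<in> S \<or> w \<in> S)}"

definition supported :: "'v set \<Rightarrow> ('v \<Rightarrow> real) \<Rightarrow> bool" where
  "supported S f \<longleftrightarrow> (\<forall>v. v \<notin> S \<longrightarrow> f v = 0)"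

lemma vdeg_ge_1: "1 \<le> vdeg v"
  using finite_nbrs nbrs_nonempty by (simp add: vdeg_def Suc_le_eq card_gt_0_iff)

lemma vdeg_pos: "0 < vdeg v"
  using vdeg_ge_1[of v] by simp

lemma vdeg_neq_0: "vdeg v \<noteq> 0"
  using vdeg_pos[of v] by simp

lemma vdeg_le_Delta: "vdeg v \<le> real \<Delta>"
  using card_nbrs_le by (simp add: vdeg_def)

lemma Delta_ge_1: "1 \<le> real \<Delta>"
  using vdeg_ge_1 vdeg_le_Delta order_trans by blast

lemma mem_nbrs_iff: "w \<in> nbrs E v \<longleftrightarrow> E v w"
  by (simp add: nbrs_def)

lemma finite_nbhd: "finite S \<Longrightarrow> finite (nbhd S)"
  using finite_nbrs by (simp add: nbhd_def)

lemma subset_nbhd: "S \<subseteq> nbhd S"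
  by (auto simp: nbhd_def)

lemma finite_nbhd_pow: "finite ((nbhd ^^ k) {y})"
  by (induction k) (auto simp: finite_nbhd)

lemma edges_at_subset: "edges_at S \<subseteq> Sigma (nbhd S) (nbrs E)"
  unfolding edges_at_def nbhd_def nbrs_def using sym by blast

lemma finite_edges_at: "finite S \<Longrightarrow> finite (edges_at S)"
  by (rule finite_subset[OF edges_at_subset]) (use finite_nbhd finite_nbrs in auto)

lemma sum_edges_at_swap:
  "(\<Sum>(v, w)\<in>edges_at S. F v w) = (\<Sum>(v, w)\<in>edges_at S. F w v)"
  by (rule sum.reindex_bij_witness[where i = prod.swap and j = prod.swap])
    (auto simp: edges_at_def intro: sym)

lemma sum_edges_at_left:
  assumes "finite S" and "\<And>v w. v \<notin> S \<Longrightarrow> F v w = 0"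
  shows "(\<Sum>(v, w)\<in>edges_at S. F v w) = (\<Sum>v\<in>S. \<Sum>w\<in>nbrs E v. F v w)"
proof -
  have "(\<Sum>v\<in>S. \<Sum>w\<in>nbrs E v. F v w) = (\<Sum>(v, w)\<in>Sigma S (nbrs E). F v w)"
    using assms(1) finite_nbrs by (simp add: sum.Sigma)
  also have "\<dots> = (\<Sum>(v, w)\<in>edges_at S. F v w)"
    using assms by (intro sum.mono_neutral_left finite_edges_at)
      (auto simp: edges_at_def mem_nbrs_iff)
  finally show ?thesis by simp
qed

lemma sum_edges_at_right:
  assumes "finite S" "finite T" "nbhd S \<subseteq> T" and "\<And>v w. w \<notin> S \<Longrightarrow> F v w = 0"
  shows "(\<Sum>v\<in>T. \<Sum>w\<in>nbrs E v. F v w) = (\<Sum>(v, w)\<in>edges_at S. F v w)"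
proof -
  have "(\<Sum>v\<in>T. \<Sum>w\<in>nbrs E v. F v w) = (\<Sum>(v, w)\<in>Sigma T (nbrs E). F v w)"
    using assms(2) finite_nbrs by (simp add: sum.Sigma)
  also have "\<dots> = (\<Sum>(v, w)\<in>edges_at S. F v w)"
  proof (rule sum.mono_neutral_right)
    show "edges_at S \<subseteq> Sigma T (nbrs E)"
      using edges_at_subset[of S] assms(3) by blast
  qed (use assms finite_nbrs in \<open>auto simp: edges_at_def mem_nbrs_iff\<close>)
  finally show ?thesis by simp
qed

lemma dnorm_eq_edge_sum:
  assumes "finite S" "supported S f"
  shows "dnorm S f = (\<Sum>(v, w)\<in>edges_at S. (f v)\<^sup>2)"
  using assms by (subst sum_edges_at_left) (auto simp: dnorm_def vdeg_def supported_def)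

lemma adj_form_eq_edge_sum:
  assumes "finite S" "supported S f"
  shows "adj_form S f = (\<Sum>(v, w)\<in>edges_at S. f v * f w)"
  using assms
  by (subst sum_edges_at_left) (auto simp: adj_form_def supported_def sum_distrib_left)

lemma edge_sum_diff_sq:
  assumes "finite S" "supported S f"
  shows "(\<Sum>(v, w)\<in>edges_at S. (f v - f w)\<^sup>2) = 2 * dnorm S f - 2 * adj_form S f"
proof -
  have "(\<Sum>(v, w)\<in>edges_at S. (f v - f w)\<^sup>2)
      = (\<Sum>(v, w)\<in>edges_at S. (f v)\<^sup>2) + (\<Sum>(v, w)\<in>edges_at S. (f w)\<^sup>2)
        - 2 * (\<Sum>(v, w)\<in>edges_at S. f v * f w)"
    by (simp add: power2_diff case_prod_beta sum.distrib sum_subtractf sum_distrib_left mult.assoc)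
  then show ?thesis
    using assms sum_edges_at_swap[of "\<lambda>v w. (f v)\<^sup>2" S]
    by (simp add: dnorm_eq_edge_sum adj_form_eq_edge_sum)
qed

lemma edge_sum_add_sq:
  assumes "finite S" "supported S f"
  shows "(\<Sum>(v, w)\<in>edges_at S. (f v + f w)\<^sup>2) = 2 * dnorm S f + 2 * adj_form S f"
proof -
  have "(\<Sum>(v, w)\<in>edges_at S. (f v + f w)\<^sup>2)
      = (\<Sum>(v, w)\<in>edges_at S. (f v)\<^sup>2) + (\<Sum>(v, w)\<in>edges_at S. (f w)\<^sup>2)
        + 2 * (\<Sum>(v, w)\<in>edges_at S. f v * f w)"
    by (simp add: power2_sum case_prod_beta sum.distrib sum_distrib_left mult.assoc)
  then show ?thesis
    using assms sum_edges_at_swap[of "\<lambda>v w. (f v)\<^sup>2" S]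
    by (simp add: dnorm_eq_edge_sum adj_form_eq_edge_sum)
qed

lemma adj_form_le_dnorm:
  assumes "finite S" "supported S f"
  shows "adj_form S f \<le> dnorm S f"
proof -
  have "0 \<le> (\<Sum>(v, w)\<in>edges_at S. (f v - f w)\<^sup>2)"
    by (auto intro: sum_nonneg)
  then show ?thesis using edge_sum_diff_sq[OF assms] by simp
qed

lemma dnorm_nonneg: "0 \<le> dnorm S f"
  unfolding dnorm_def using vdeg_pos by (intro sum_nonneg mult_nonneg_nonneg) (auto intro: less_imp_le)

lemma dnorm_le_Delta_sum_sq: "dnorm S f \<le> real \<Delta> * (\<Sum>v\<in>S. (f v)\<^sup>2)"
  unfolding dnorm_def sum_distrib_left using vdeg_le_Delta by (intro sum_mono mult_right_mono) auto

lemma dnorm_superset: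
  assumes "finite T" "S \<subseteq> T" "supported S f"
  shows "dnorm T f = dnorm S f"
  unfolding dnorm_def using assms
  by (intro sum.mono_neutral_right[symmetric, symmetric]) (auto simp: supported_def)

lemma nbr_avg_nonneg: "(\<And>w. 0 \<le> f w) \<Longrightarrow> 0 \<le> nbr_avg f v"
  unfolding nbr_avg_def using vdeg_pos[of v] by (intro divide_nonneg_pos sum_nonneg) auto

lemma nbr_avg_mono: "(\<And>w. f w \<le> g w) \<Longrightarrow> nbr_avg f v \<le> nbr_avg g v"
  unfolding nbr_avg_def using vdeg_pos[of v] by (intro divide_right_mono sum_mono) auto

lemma nbr_avg_scale: "nbr_avg (\<lambda>w. a * f w) v = a * nbr_avg f v"
  unfolding nbr_avg_def by (simp add: sum_distrib_left)

lemma nbr_avg_iter_nonneg: "(\<And>w. 0 \<le> f w) \<Longrightarrow> 0 \<le> (nbr_avg ^^ k) f v"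
  by (induction k arbitrary: v) (simp_all add: nbr_avg_nonneg)

lemma lazy_avg_iter_nonneg: "(\<And>w. 0 \<le> f w) \<Longrightarrow> 0 \<le> (lazy_avg ^^ k) f v"
  by (induction k arbitrary: v) (simp_all add: lazy_avg_def nbr_avg_nonneg)

lemma supported_nbr_avg:
  assumes "supported S f"
  shows "supported (nbhd S) (nbr_avg f)"
  unfolding supported_def
proof (intro allI impI)
  fix v assume v: "v \<notin> nbhd S"
  have "f w = 0" if "w \<in> nbrs E v" for w
  proof -
    have "w \<notin> S" using v that sym by (auto simp: nbhd_def mem_nbrs_iff)
    then show ?thesis using assms by (simp add: supported_def)
  qed
  then show "nbr_avg f v = 0" by (simp add: nbr_avg_def)
qed

lemma supported_lazy_avg: "supported S f \<Longrightarrow> supported (nbhd S) (lazy_avg f)"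
  using supported_nbr_avg[of S f] subset_nbhd[of S] by (auto simp: supported_def lazy_avg_def)

lemma vdeg_nbr_avg_sq: "vdeg v * (nbr_avg f v)\<^sup>2 \<le> (\<Sum>w\<in>nbrs E v. (f w)\<^sup>2)"
proof -
  have "(\<Sum>w\<in>nbrs E v. 1 * f w)\<^sup>2 \<le> (\<Sum>w\<in>nbrs E v. 1\<^sup>2) * (\<Sum>w\<in>nbrs E v. (f w)\<^sup>2)"
    by (rule Cauchy_Schwarz_ineq_sum)
  then have "(\<Sum>w\<in>nbrs E v. f w)\<^sup>2 \<le> vdeg v * (\<Sum>w\<in>nbrs E v. (f w)\<^sup>2)"
    by (simp add: vdeg_def)
  then show ?thesis
    using vdeg_pos[of v] by (simp add: nbr_avg_def power_divide field_simps power2_eq_square)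
qed

lemma dnorm_nbr_avg_le:
  assumes "finite S" "finite T" "nbhd S \<subseteq> T" "supported S f"
  shows "dnorm T (nbr_avg f) \<le> dnorm S f"
proof -
  have "dnorm T (nbr_avg f) \<le> (\<Sum>v\<in>T. \<Sum>w\<in>nbrs E v. (f w)\<^sup>2)"
    unfolding dnorm_def by (intro sum_mono vdeg_nbr_avg_sq)
  also have "\<dots> = (\<Sum>(v, w)\<in>edges_at S. (f w)\<^sup>2)"
    using assms by (intro sum_edges_at_right) (auto simp: supported_def)
  also have "\<dots> = dnorm S f"
    using assms sum_edges_at_swap[of "\<lambda>v w. (f v)\<^sup>2" S] by (simp add: dnorm_eq_edge_sum)
  finally show ?thesis .
qed

lemma dnorm_lazy_avg:
  assumes "finite S" "finite T" "nbhd S \<subseteq> T" "supported S f"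
  shows "dnorm T (lazy_avg f) = (dnorm S f + 2 * adj_form S f + dnorm T (nbr_avg f)) / 4"
proof -
  have ST: "S \<subseteq> T" using assms(3) subset_nbhd by blast
  have cross: "(\<Sum>v\<in>T. vdeg v * f v * nbr_avg f v) = adj_form S f"
  proof -
    have "(\<Sum>v\<in>T. vdeg v * f v * nbr_avg f v) = (\<Sum>v\<in>T. f v * (\<Sum>w\<in>nbrs E v. f w))"
      by (simp add: nbr_avg_def vdeg_neq_0)
    also have "\<dots> = adj_form S f"
      unfolding adj_form_def using assms(2,4) ST
      by (intro sum.mono_neutral_right[symmetric, symmetric]) (auto simp: supported_def)
    finally show ?thesis .
  qed
  have "dnorm T (lazy_avg f)
      = (dnorm T f + 2 * (\<Sum>v\<in>T. vdeg v * f v * nbr_avg f v) + dnorm T (nbr_avg f)) / 4"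
    unfolding dnorm_def lazy_avg_def
    by (simp add: power2_sum power_divide sum_divide_distrib[symmetric] sum.distrib
        sum_distrib_left algebra_simps)
  then show ?thesis
    using cross dnorm_superset[OF assms(2) ST assms(4)] by simp
qed

lemma binomial_le_lazy_avg_iter:
  assumes "\<And>w. 0 \<le> f w"
  shows "real (k choose j) / 2 ^ k * (nbr_avg ^^ j) f v \<le> (lazy_avg ^^ k) f v"
proof (induction k arbitrary: j v)
  case 0
  show ?case using assms by (cases j) auto
next
  case (Suc k)
  let ?g = "(lazy_avg ^^ k) f"
  have step: "(lazy_avg ^^ Suc k) f v = (?g v + nbr_avg ?g v) / 2"
    by (simp add: lazy_avg_def)
  show ?case
  proof (cases j)
    case 0
    have "0 \<le> nbr_avg ?g v"
      using lazy_avg_iter_nonneg assms by (intro nbr_avg_nonneg) blast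
    then show ?thesis using Suc.IH[of 0 v] assms 0 step by simp
  next
    case (Suc i)
    have "real (k choose i) / 2 ^ k * nbr_avg ((nbr_avg ^^ i) f) v \<le> nbr_avg ?g v"
      unfolding nbr_avg_scale[symmetric] by (intro nbr_avg_mono Suc.IH)
    then have B: "real (k choose i) / 2 ^ k * (nbr_avg ^^ j) f v \<le> nbr_avg ?g v"
      using Suc by simp
    have A: "real (k choose j) / 2 ^ k * (nbr_avg ^^ j) f v \<le> ?g v"
      by (rule Suc.IH)
    have pascal: "real (Suc k choose j) / 2 ^ Suc k * (nbr_avg ^^ j) f v
        = (real (k choose j) / 2 ^ k * (nbr_avg ^^ j) f v
           + real (k choose i) / 2 ^ k * (nbr_avg ^^ j) f v) / 2"
      using Suc by (simp add: field_simps)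
    show ?thesis
      unfolding step pascal by (intro divide_right_mono add_mono A B) simp
  qed
qed

lemma walk_prob_0: "walk_prob 0 x y = (if x = y then 1 else 0)"
  by (simp add: walk_prob_def)

lemma walk_prob_Suc: "walk_prob (Suc k) x y = (\<Sum>w\<in>nbrs E x. walk_prob k w y) / vdeg x"
  by (simp add: walk_prob_def nbr_avg_def)

lemma walk_prob_nonneg: "0 \<le> walk_prob k x y"
  unfolding walk_prob_def by (rule nbr_avg_iter_nonneg) simp

lemma walk_prob_nonzero_imp_walk:
  "walk_prob k x y \<noteq> 0 \<Longrightarrow> \<exists>p. is_walk E p \<and> hd p = x \<and> last p = y \<and> length p = Suc k"
proof (induction k arbitrary: x)
  case 0
  then show ?case
    by (intro exI[of _ "[x]"]) (simp add: is_walk_def walk_prob_0 split: if_splits)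
next
  case (Suc k)
  then obtain w where w: "E x w" "walk_prob k w y \<noteq> 0"
    by (metis mem_nbrs_iff sum.neutral walk_prob_Suc div_0)
  obtain p where p: "is_walk E p" "hd p = w" "last p = y" "length p = Suc k"
    using Suc.IH[OF w(2)] by blast
  then have "p \<noteq> []" by (simp add: is_walk_def)
  have "is_walk E (x # p)"
    unfolding is_walk_def
  proof (intro conjI allI impI)
    fix i assume "i < length (x # p) - 1"
    then show "E ((x # p) ! i) ((x # p) ! Suc i)"
      using w(1) p \<open>p \<noteq> []\<close> by (cases i) (auto simp: is_walk_def hd_conv_nth)
  qed simp
  then show ?case using p \<open>p \<noteq> []\<close> by (intro exI[of _ "x # p"]) simp
qed

lemma walk_prob_below_gdist: "k < gdist E x y \<Longrightarrow> walk_prob k x y = 0"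
  using walk_prob_nonzero_imp_walk[of k x y] Least_le[of _ k]
  unfolding gdist_def by (metis (mono_tags, lifting) not_less)

end

section \<open>First moment of the branching random walk\<close>

lemma nn_integral_add_const_pmf:
  "(\<integral>\<^sup>+x. c + f x \<partial>measure_pmf p) = c + (\<integral>\<^sup>+x. f x \<partial>measure_pmf p)" for c :: ennreal
  by (simp add: nn_integral_add measure_pmf.emeasure_space_1)

lemma nn_integral_sum_list_seq_pmf:
  "(\<integral>\<^sup>+xs. sum_list (map g xs) \<partial>measure_pmf (seq_pmf ps))
     = sum_list (map (\<lambda>p. \<integral>\<^sup>+x. g x \<partial>measure_pmf p) ps)"
  for g :: "'a \<Rightarrow> ennreal"
proof (induction ps)
  case (Cons p ps)
  have "(\<integral>\<^sup>+xs. sum_list (map g xs) \<partial>measure_pmf (seq_pmf (p # ps)))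
      = (\<integral>\<^sup>+x. (\<integral>\<^sup>+xs. g x + sum_list (map g xs) \<partial>measure_pmf (seq_pmf ps)) \<partial>measure_pmf p)"
    by simp
  also have "\<dots> = (\<integral>\<^sup>+x. g x + (\<integral>\<^sup>+xs. sum_list (map g xs) \<partial>measure_pmf (seq_pmf ps)) \<partial>measure_pmf p)"
    by (simp only: nn_integral_add_const_pmf)
  also have "\<dots> = (\<integral>\<^sup>+x. g x \<partial>measure_pmf p)
      + (\<integral>\<^sup>+xs. sum_list (map g xs) \<partial>measure_pmf (seq_pmf ps))"
    by (simp add: nn_integral_add measure_pmf.emeasure_space_1)
  finally show ?case using Cons by simp
qed simp

lemma nn_integral_poisson_mean:
  assumes "0 < r"
  shows "(\<integral>\<^sup>+k. of_nat k \<partial>measure_pmf (poisson_pmf r)) = ennreal r"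
proof -
  define f where "f k = r ^ k / fact k * exp (- r) * real k" for k
  have "(\<lambda>k. (r * exp (- r)) * (r ^ k / fact k)) sums ((r * exp (- r)) * exp r)"
    using exp_converges[of r] by (intro sums_mult) (simp add: divide_inverse mult.commute)
  moreover have "(r * exp (- r)) * (r ^ k / fact k) = f (Suc k)" for k
  proof -
    have cancel: "(r * r ^ k) / (m * c) * exp (- r) * m = (r * exp (- r)) * (r ^ k / c)"
      if "0 < m" "0 < c" for m c :: real
      using that by (simp add: field_simps)
    show ?thesis
      unfolding f_def fact_Suc by (simp add: cancel del: of_nat_Suc)
  qed
  ultimately have "(\<lambda>k. f (Suc k)) sums r"
    by (simp add: exp_minus field_simps)
  then have f_sums: "f sums r"
    using sums_Suc_iff[of f r] by (simp add: f_def)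
  have "(\<integral>\<^sup>+k. of_nat k \<partial>measure_pmf (poisson_pmf r)) = (\<Sum>k. ennreal (f k))"
    unfolding nn_integral_measure_pmf nn_integral_count_space_nat[symmetric]
    by (rule nn_integral_cong)
      (use assms in \<open>simp add: f_def ennreal_of_nat_eq_real_of_nat ennreal_mult''[symmetric]\<close>)
  also have "\<dots> = ennreal r"
    using f_sums assms by (subst suminf_ennreal2) (auto simp: f_def sums_iff)
  finally show ?thesis .
qed

lemma nn_integral_poisson_affine:
  assumes "0 < r"
  shows "(\<integral>\<^sup>+k. c + of_nat k * a \<partial>measure_pmf (poisson_pmf r)) = c + ennreal r * a"
  using nn_integral_poisson_mean[OF assms]
  by (simp add: nn_integral_add_const_pmf nn_integral_multc)

fun visit_count :: "'v \<Rightarrow> 'v btree \<Rightarrow> ennreal" where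
  "visit_count y (Nd t v cs) = (if v = y then 1 else 0) + sum_list (map (visit_count y) cs)"

lemma visits_imp_visit_count_ge_1: "visits y T \<Longrightarrow> 1 \<le> visit_count y T"
proof (induction T)
  case (Nd t v cs)
  show ?case
  proof (cases "v = y")
    case False
    then obtain c where "c \<in> set cs" "visits y c" using Nd.prems by auto
    then have "1 \<le> visit_count y c" using Nd.IH by blast
    also have "\<dots> \<le> sum_list (map (visit_count y) cs)"
      using \<open>c \<in> set cs\<close> by (intro member_le_sum_list) auto
    finally show ?thesis using False by simp
  qed simp
qed

fun type_weight :: "ptype \<Rightarrow> real" where
  "type_weight Circ = 3"
| "type_weight Bullet = 1"

lemma type_weight_ge_1: "1 \<le> type_weight t"
  by (cases t) auto

lemma emeasure_visits_le_nn_integral_visit_count: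
  fixes y :: 'v
  shows "emeasure (measure_pmf p) {F. \<exists>c\<in>set F. visits y c}
    \<le> (\<integral>\<^sup>+F. sum_list (map (visit_count y) F) \<partial>measure_pmf p)"
proof (subst nn_integral_indicator[symmetric], simp, rule nn_integral_mono)
  fix F :: "'v btree list"
  show "indicator {F. \<exists>c\<in>set F. visits y c} F \<le> sum_list (map (visit_count y) F)"
  proof (cases "\<exists>c\<in>set F. visits y c")
    case True
    then obtain c where c: "c \<in> set F" "visits y c" by blast
    have "1 \<le> visit_count y c" using c(2) by (rule visits_imp_visit_count_ge_1)
    also have "\<dots> \<le> sum_list (map (visit_count y) F)"
      using c(1) by (intro member_le_sum_list) auto
    finally show ?thesis using True by simp
  qed simp
qed

context bounded_degree_graph
begin

lemma nbr_avg_ennreal_le: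
  assumes "\<And>w. G w \<le> ennreal (F w)" "\<And>w. 0 \<le> F w"
  shows "(\<Sum>w\<in>nbrs E v. G w) / ennreal (vdeg v) \<le> ennreal (nbr_avg F v)"
proof -
  have "(\<Sum>w\<in>nbrs E v. G w) \<le> (\<Sum>w\<in>nbrs E v. ennreal (F w))"
    using assms(1) by (rule sum_mono)
  also have "\<dots> = ennreal (\<Sum>w\<in>nbrs E v. F w)"
    using assms(2) by (intro sum_ennreal) auto
  finally have "(\<Sum>w\<in>nbrs E v. G w) / ennreal (vdeg v)
      \<le> ennreal (\<Sum>w\<in>nbrs E v. F w) / ennreal (vdeg v)"
    by (rule divide_right_mono_ennreal)
  also have "\<dots> = ennreal (nbr_avg F v)"
    using assms(2) vdeg_pos[of v] by (simp add: nbr_avg_def divide_ennreal sum_nonneg)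
  finally show ?thesis .
qed

lemma nbr_avg_walk_sum:
  "nbr_avg (\<lambda>w. \<Sum>k\<le>n. q ^ k * walk_prob k w y) v = (\<Sum>k\<le>n. q ^ k * walk_prob (Suc k) v y)"
  by (simp add: nbr_avg_def walk_prob_Suc sum_divide_distrib sum_distrib_left
      sum.swap[of _ "nbrs E v"])

definition expected_visits :: "real \<Rightarrow> 'v \<Rightarrow> nat \<Rightarrow> ptype \<Rightarrow> 'v \<Rightarrow> ennreal" where
  "expected_visits r y n t v = (\<integral>\<^sup>+T. visit_count y T \<partial>measure_pmf (bgen E r n t v))"

lemma expected_visits_0: "expected_visits r y 0 t v = (if v = y then 1 else 0)"
  by (simp add: expected_visits_def)

lemma expected_visits_step:
  "(\<integral>\<^sup>+T. visit_count y T \<partial>measure_pmf (pmf_of_set (nbrs E v) \<bind> (\<lambda>w. bgen E r n s w)))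
    = (\<Sum>w\<in>nbrs E v. expected_visits r y n s w) / ennreal (vdeg v)"
  using nn_integral_pmf_of_set[OF nbrs_nonempty finite_nbrs]
  by (simp add: expected_visits_def vdeg_def ennreal_of_nat_eq_real_of_nat)

lemma expected_visits_Suc:
  assumes "0 < r"
  shows "expected_visits r y (Suc n) t v
    = ((if v = y then 1 else 0)
        + of_nat (n_bullet t) * ((\<Sum>w\<in>nbrs E v. expected_visits r y n Bullet w) / ennreal (vdeg v)))
      + ennreal r * ((\<Sum>w\<in>nbrs E v. expected_visits r y n Circ w) / ennreal (vdeg v))"
proof -
  define child where "child s = pmf_of_set (nbrs E v) \<bind> (\<lambda>w. bgen E r n s w)" for s
  define A where "A s = (\<Sum>w\<in>nbrs E v. expected_visits r y n s w) / ennreal (vdeg v)" for s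
  have child: "(\<integral>\<^sup>+T. visit_count y T \<partial>measure_pmf (child s)) = A s" for s
    unfolding child_def A_def by (rule expected_visits_step)
  have children: "(\<integral>\<^sup>+cs. visit_count y (Nd t v cs)
        \<partial>measure_pmf (seq_pmf (map child (replicate (n_bullet t) Bullet @ replicate k Circ))))
      = ((if v = y then 1 else 0) + of_nat (n_bullet t) * A Bullet) + of_nat k * A Circ" for k
    by (simp only: visit_count.simps nn_integral_add_const_pmf nn_integral_sum_list_seq_pmf)
      (simp add: child sum_list_replicate add.assoc)
  have "expected_visits r y (Suc n) t v = (\<integral>\<^sup>+k. (\<integral>\<^sup>+cs. visit_count y (Nd t v cs)
      \<partial>measure_pmf (seq_pmf (map child (replicate (n_bullet t) Bullet @ replicate k Circ))))
      \<partial>measure_pmf (poisson_pmf r))"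
    by (simp add: expected_visits_def child_def)
  also have "\<dots> = ((if v = y then 1 else 0) + of_nat (n_bullet t) * A Bullet) + ennreal r * A Circ"
    unfolding children by (rule nn_integral_poisson_affine[OF assms])
  finally show ?thesis by (simp add: A_def)
qed

(* The weights close the induction: n_bullet t + 3 r \<le> type_weight t * (1 + 3 r) for both types. *)
lemma expected_visits_le:
  assumes "0 < r"
  shows "expected_visits r y n t v
    \<le> ennreal (type_weight t * (\<Sum>k\<le>n. (1 + 3 * r) ^ k * walk_prob k v y))"
proof (induction n arbitrary: t v)
  case 0
  show ?case using type_weight_ge_1[of t] by (simp add: expected_visits_0 walk_prob_0)
next
  case (Suc n)
  define S where "S = (\<Sum>k\<le>n. (1 + 3 * r) ^ k * walk_prob (Suc k) v y)"
  have S_nonneg: "0 \<le> S"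
    unfolding S_def using assms walk_prob_nonneg by (intro sum_nonneg mult_nonneg_nonneg) auto
  have avg: "(\<Sum>w\<in>nbrs E v. expected_visits r y n s w) / ennreal (vdeg v)
      \<le> ennreal (type_weight s * S)" for s
  proof -
    have "(\<Sum>w\<in>nbrs E v. expected_visits r y n s w) / ennreal (vdeg v)
        \<le> ennreal (nbr_avg (\<lambda>w. type_weight s * (\<Sum>k\<le>n. (1 + 3 * r) ^ k * walk_prob k w y)) v)"
      using assms type_weight_ge_1[of s] walk_prob_nonneg
      by (intro nbr_avg_ennreal_le Suc.IH) (auto intro!: mult_nonneg_nonneg sum_nonneg)
    then show ?thesis by (simp add: nbr_avg_scale nbr_avg_walk_sum S_def)
  qed
  have "expected_visits r y (Suc n) t v
      \<le> (ennreal (if v = y then 1 else 0) + of_nat (n_bullet t) * ennreal (type_weight Bullet * S))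
        + ennreal r * ennreal (type_weight Circ * S)"
    unfolding expected_visits_Suc[OF assms] by (intro add_mono mult_left_mono avg) auto
  also have "\<dots> = ennreal ((if v = y then 1 else 0) + (real (n_bullet t) + 3 * r) * S)"
    using S_nonneg assms by (simp add: ennreal_of_nat_eq_real_of_nat ennreal_mult algebra_simps)
  also have "\<dots> \<le> ennreal (type_weight t * (\<Sum>k\<le>Suc n. (1 + 3 * r) ^ k * walk_prob k v y))"
  proof (rule ennreal_leI)
    have split: "(\<Sum>k\<le>Suc n. (1 + 3 * r) ^ k * walk_prob k v y)
        = (if v = y then 1 else 0) + (1 + 3 * r) * S"
      unfolding sum.atMost_Suc_shift S_def by (simp add: walk_prob_0 sum_distrib_left mult.assoc)
    have "real (n_bullet t) + 3 * r \<le> type_weight t * (1 + 3 * r)"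
      using assms by (cases t) auto
    then have "(if v = y then 1 else 0) + (real (n_bullet t) + 3 * r) * S
        \<le> type_weight t * (if v = y then 1 else 0) + type_weight t * (1 + 3 * r) * S"
      using type_weight_ge_1[of t] S_nonneg by (intro add_mono mult_right_mono) auto
    then show "(if v = y then 1 else 0) + (real (n_bullet t) + 3 * r) * S
        \<le> type_weight t * (\<Sum>k\<le>Suc n. (1 + 3 * r) ^ k * walk_prob k v y)"
      unfolding split by (simp add: algebra_simps)
  qed
  finally show ?case .
qed

lemma hit_prob_forest_le:
  assumes "0 < r"
  shows "measure_pmf.prob (bforest E r n x) {F. \<exists>c\<in>set F. visits y c}
    \<le> 3 * r * (\<Sum>k\<le>n. (1 + 3 * r) ^ k * walk_prob k x y)"
proof -
  define B where "B = 3 * r * (\<Sum>k\<le>n. (1 + 3 * r) ^ k * walk_prob k x y)"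
  have B_nonneg: "0 \<le> B"
    unfolding B_def using assms walk_prob_nonneg by (intro mult_nonneg_nonneg sum_nonneg) auto
  have "emeasure (bforest E r n x) {F. \<exists>c\<in>set F. visits y c}
      \<le> (\<integral>\<^sup>+F. sum_list (map (visit_count y) F) \<partial>measure_pmf (bforest E r n x))"
    by (rule emeasure_visits_le_nn_integral_visit_count)
  also have "\<dots> = ennreal r * expected_visits r y n Circ x"
    by (simp only: bforest_def nn_integral_bind_pmf nn_integral_sum_list_seq_pmf map_replicate
        sum_list_replicate expected_visits_def)
      (rule nn_integral_poisson_affine[OF assms, of 0, simplified])
  also have "\<dots> \<le> ennreal r * ennreal (3 * (\<Sum>k\<le>n. (1 + 3 * r) ^ k * walk_prob k x y))"
    using expected_visits_le[OF assms, of y n Circ x] by (intro mult_left_mono) auto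
  also have "\<dots> = ennreal B"
  proof -
    have "0 \<le> 3 * (\<Sum>k\<le>n. (1 + 3 * r) ^ k * walk_prob k x y)"
      using assms walk_prob_nonneg by (intro mult_nonneg_nonneg sum_nonneg) auto
    then have "ennreal r * ennreal (3 * (\<Sum>k\<le>n. (1 + 3 * r) ^ k * walk_prob k x y))
        = ennreal (r * (3 * (\<Sum>k\<le>n. (1 + 3 * r) ^ k * walk_prob k x y)))"
      by (rule ennreal_mult''[symmetric])
    then show ?thesis by (simp add: B_def ac_simps)
  qed
  finally show ?thesis
    using B_nonneg by (simp add: B_def measure_pmf.emeasure_eq_measure)
qed

end

section \<open>Non-amenable graphs\<close>

locale nonamenable_graph = bounded_degree_graph +
  fixes h :: real
  assumes h_pos: "0 < h"
    and isoperimetric: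
      "\<And>K. finite K \<Longrightarrow> K \<noteq> {} \<Longrightarrow> h * real (card K) \<le> real (card (vboundary E K))"
begin

lemma h_le_Delta: "h \<le> real \<Delta>"
proof -
  fix v
  have "vboundary E {v} \<subseteq> nbrs E v"
    by (auto simp: vboundary_def nbrs_def)
  then have "card (vboundary E {v}) \<le> \<Delta>"
    using card_mono[OF finite_nbrs] card_nbrs_le order_trans by blast
  then show ?thesis
    using isoperimetric[of "{v}"] by simp
qed

definition lazy_contraction :: real where
  "lazy_contraction = 1 - h\<^sup>2 / (16 * (real \<Delta>)\<^sup>2)"

lemma lazy_contraction_bounds: "0 \<le> lazy_contraction" "lazy_contraction < 1"
proof -
  have "h\<^sup>2 \<le> (real \<Delta>)\<^sup>2"
    using h_pos h_le_Delta by (intro power_mono) auto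
  then have "h\<^sup>2 \<le> 16 * (real \<Delta>)\<^sup>2"
    using zero_le_power2[of "real \<Delta>"] by linarith
  then have "h\<^sup>2 / (16 * (real \<Delta>)\<^sup>2) \<le> 1"
    using Delta_ge_1 by (simp add: divide_le_eq)
  then show "0 \<le> lazy_contraction"
    by (simp add: lazy_contraction_def)
  have "0 < h\<^sup>2 / (16 * (real \<Delta>)\<^sup>2)"
    using h_pos Delta_ge_1 by (intro divide_pos_pos) auto
  then show "lazy_contraction < 1"
    by (simp add: lazy_contraction_def)
qed

subsection \<open>Co-area inequality and Cheeger's inequality\<close>

lemma isoperimetric_edges:
  assumes "finite S" "K \<subseteq> S" "K \<noteq> {}"
  shows "h * real (card K) \<le> (\<Sum>(v, w)\<in>edges_at S. \<bar>indicator K v - (indicator K w :: real)\<bar>)"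
proof -
  define B where "B = {(v, w)\<in>edges_at S. v \<in> K \<and> w \<notin> K}"
  have B_sub: "B \<subseteq> edges_at S" by (auto simp: B_def)
  have "finite B"
    using finite_edges_at[OF assms(1)] B_sub finite_subset by blast
  have "vboundary E K \<subseteq> snd ` B"
    using assms(2) by (force simp: vboundary_def B_def edges_at_def)
  then have "card (vboundary E K) \<le> card B"
    using \<open>finite B\<close> card_image_le card_mono finite_imageI order_trans by metis
  also have "real (card B) = (\<Sum>(v, w)\<in>B. \<bar>indicator K v - (indicator K w :: real)\<bar>)"
    by (simp add: B_def case_prod_beta)
  also have "\<dots> \<le> (\<Sum>(v, w)\<in>edges_at S. \<bar>indicator K v - (indicator K w :: real)\<bar>)"
    using B_sub finite_edges_at[OF assms(1)] by (intro sum_mono2) auto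
  finally show ?thesis
    using isoperimetric[of K] assms finite_subset by fastforce
qed

(* Induction on the size of the support: peel off the minimum m of g over its support K. *)
lemma coarea_inequality:
  assumes "finite S"
  shows "supported S g \<Longrightarrow> (\<And>v. 0 \<le> g v) \<Longrightarrow>
    h * (\<Sum>v\<in>S. g v) \<le> (\<Sum>(v, w)\<in>edges_at S. \<bar>g v - g w\<bar>)"
proof (induction "card {v\<in>S. g v \<noteq> 0}" arbitrary: g rule: less_induct)
  case (less g)
  define K where "K = {v\<in>S. g v \<noteq> 0}"
  show ?case
  proof (cases "K = {}")
    case True
    then show ?thesis by (auto simp: K_def intro: sum_nonneg)
  next
    case False
    have "finite K" "K \<subseteq> S" using assms by (auto simp: K_def)
    define m where "m = Min (g ` K)"
    have "m \<in> g ` K" using \<open>finite K\<close> False by (simp add: m_def)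
    then obtain v0 where v0: "v0 \<in> K" "g v0 = m" by auto
    have m_pos: "0 < m" using v0 less.prems(2)[of v0] by (auto simp: K_def)
    have m_le: "v \<in> K \<Longrightarrow> m \<le> g v" for v using \<open>finite K\<close> by (simp add: m_def)
    have g_out: "v \<notin> K \<Longrightarrow> g v = 0" for v
      using less.prems(1) by (auto simp: K_def supported_def)
    define g' where "g' v = (if v \<in> K then g v - m else 0)" for v
    have g_eq: "g v = m * indicator K v + g' v" for v
      using g_out by (auto simp: g'_def)
    have edge_eq: "\<bar>g v - g w\<bar> = m * \<bar>indicator K v - indicator K w\<bar> + \<bar>g' v - g' w\<bar>" for v w
      using m_pos m_le[of v] m_le[of w] g_out[of v] g_out[of w]
      by (cases "v \<in> K"; cases "w \<in> K") (auto simp: g'_def)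
    have "{v\<in>S. g' v \<noteq> 0} \<subset> K" using v0 by (auto simp: g'_def K_def)
    then have "card {v\<in>S. g' v \<noteq> 0} < card {v\<in>S. g v \<noteq> 0}"
      using psubset_card_mono \<open>finite K\<close> unfolding K_def by blast
    moreover have "supported S g'" using \<open>K \<subseteq> S\<close> by (auto simp: g'_def supported_def)
    moreover have "0 \<le> g' v" for v using m_le by (auto simp: g'_def)
    ultimately have IH: "h * (\<Sum>v\<in>S. g' v) \<le> (\<Sum>(v, w)\<in>edges_at S. \<bar>g' v - g' w\<bar>)"
      using less.hyps by blast
    have "h * (\<Sum>v\<in>S. g v) = m * (h * real (card K)) + h * (\<Sum>v\<in>S. g' v)"
      using \<open>K \<subseteq> S\<close> assms
      by (simp add: g_eq sum.distrib sum_distrib_left[symmetric] indicator_def Int_absorb1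
          algebra_simps)
    also have "\<dots> \<le> m * (\<Sum>(v, w)\<in>edges_at S. \<bar>indicator K v - indicator K w\<bar>)
        + (\<Sum>(v, w)\<in>edges_at S. \<bar>g' v - g' w\<bar>)"
      using isoperimetric_edges[OF assms \<open>K \<subseteq> S\<close> False] IH m_pos
      by (intro add_mono mult_left_mono) auto
    also have "\<dots> = (\<Sum>(v, w)\<in>edges_at S. \<bar>g v - g w\<bar>)"
      by (simp add: edge_eq case_prod_beta sum.distrib sum_distrib_left)
    finally show ?thesis .
  qed
qed

lemma isoperimetric_sq_bound:
  assumes "finite S" "supported S f"
  shows "(h * (\<Sum>v\<in>S. (f v)\<^sup>2))\<^sup>2
    \<le> (2 * dnorm S f - 2 * adj_form S f) * (2 * dnorm S f + 2 * adj_form S f)"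
proof -
  have "h * (\<Sum>v\<in>S. (f v)\<^sup>2) \<le> (\<Sum>(v, w)\<in>edges_at S. \<bar>(f v)\<^sup>2 - (f w)\<^sup>2\<bar>)"
    using assms by (intro coarea_inequality) (auto simp: supported_def)
  also have "\<dots> = (\<Sum>p\<in>edges_at S. \<bar>f (fst p) - f (snd p)\<bar> * \<bar>f (fst p) + f (snd p)\<bar>)"
    by (rule sum.cong) (auto simp: abs_mult[symmetric] power2_eq_square algebra_simps)
  finally have "(h * (\<Sum>v\<in>S. (f v)\<^sup>2))\<^sup>2
      \<le> (\<Sum>p\<in>edges_at S. \<bar>f (fst p) - f (snd p)\<bar> * \<bar>f (fst p) + f (snd p)\<bar>)\<^sup>2"
    using h_pos by (intro power_mono mult_nonneg_nonneg sum_nonneg) auto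
  also have "\<dots> \<le> (\<Sum>(v, w)\<in>edges_at S. (f v - f w)\<^sup>2) * (\<Sum>(v, w)\<in>edges_at S. (f v + f w)\<^sup>2)"
    using Cauchy_Schwarz_ineq_sum[of "\<lambda>p. \<bar>f (fst p) - f (snd p)\<bar>"
        "\<lambda>p. \<bar>f (fst p) + f (snd p)\<bar>" "edges_at S"]
    by (simp add: case_prod_beta)
  finally show ?thesis
    using edge_sum_diff_sq[OF assms] edge_sum_add_sq[OF assms] by simp
qed

lemma cheeger_inequality:
  assumes "finite S" "supported S f"
  shows "adj_form S f \<le> (1 - h\<^sup>2 / (8 * (real \<Delta>)\<^sup>2)) * dnorm S f"
proof -
  define N where "N = dnorm S f"
  define Q where "Q = adj_form S f"
  have "Q \<le> N" unfolding N_def Q_def by (rule adj_form_le_dnorm[OF assms])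
  have "0 \<le> N" unfolding N_def by (rule dnorm_nonneg)
  have "N / real \<Delta> \<le> (\<Sum>v\<in>S. (f v)\<^sup>2)"
    using dnorm_le_Delta_sum_sq[of S f] Delta_ge_1 unfolding N_def
    by (simp add: pos_divide_le_eq mult.commute)
  then have "h * N / real \<Delta> \<le> h * (\<Sum>v\<in>S. (f v)\<^sup>2)"
    using h_pos mult_left_mono[of "N / real \<Delta>" _ h] by simp
  then have "(h * N / real \<Delta>)\<^sup>2 \<le> (h * (\<Sum>v\<in>S. (f v)\<^sup>2))\<^sup>2"
    using h_pos \<open>0 \<le> N\<close> Delta_ge_1 by (intro power_mono) auto
  also have "\<dots> \<le> (2 * N - 2 * Q) * (2 * N + 2 * Q)"
    unfolding N_def Q_def by (rule isoperimetric_sq_bound[OF assms])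
  also have "\<dots> \<le> (2 * N - 2 * Q) * (4 * N)"
    using \<open>Q \<le> N\<close> by (intro mult_left_mono) auto
  finally have "Q \<le> (1 - h\<^sup>2 / (8 * (real \<Delta>)\<^sup>2)) * N"
    using \<open>Q \<le> N\<close> \<open>0 \<le> N\<close> by (rule spectral_gap_of_sq_bound)
  then show ?thesis unfolding N_def Q_def .
qed

subsection \<open>Decay of the simple random walk\<close>

lemma dnorm_lazy_avg_le:
  assumes "finite S" "finite T" "nbhd S \<subseteq> T" "supported S f"
  shows "dnorm T (lazy_avg f) \<le> lazy_contraction * dnorm S f"
  using dnorm_lazy_avg[OF assms] dnorm_nbr_avg_le[OF assms] cheeger_inequality[OF assms(1,4)]
  by (simp add: lazy_contraction_def field_simps)

lemma dnorm_lazy_avg_iter_indicator: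
  "supported ((nbhd ^^ k) {y}) ((lazy_avg ^^ k) (indicator {y}))
   \<and> dnorm ((nbhd ^^ k) {y}) ((lazy_avg ^^ k) (indicator {y})) \<le> lazy_contraction ^ k * vdeg y"
proof (induction k)
  case 0
  show ?case by (simp add: supported_def dnorm_def)
next
  case (Suc k)
  let ?B = "(nbhd ^^ k) {y}" and ?g = "(lazy_avg ^^ k) (indicator {y})"
  have "dnorm (nbhd ?B) (lazy_avg ?g) \<le> lazy_contraction * dnorm ?B ?g"
    using Suc.IH finite_nbhd_pow finite_nbhd[OF finite_nbhd_pow]
    by (intro dnorm_lazy_avg_le) auto
  also have "\<dots> \<le> lazy_contraction * (lazy_contraction ^ k * vdeg y)"
    using Suc.IH lazy_contraction_bounds by (intro mult_left_mono) auto
  finally show ?case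
    using Suc.IH supported_lazy_avg by simp
qed

lemma lazy_avg_iter_indicator_sq_le:
  "((lazy_avg ^^ k) (indicator {y}) x)\<^sup>2 \<le> lazy_contraction ^ k * real \<Delta>"
proof -
  let ?g = "(lazy_avg ^^ k) (indicator {y})"
  have "(?g x)\<^sup>2 \<le> dnorm ((nbhd ^^ k) {y}) ?g"
  proof (cases "x \<in> (nbhd ^^ k) {y}")
    case True
    have "(?g x)\<^sup>2 \<le> vdeg x * (?g x)\<^sup>2"
      using vdeg_ge_1[of x] by (simp add: mult_le_cancel_right1)
    also have "\<dots> \<le> dnorm ((nbhd ^^ k) {y}) ?g"
      unfolding dnorm_def using True finite_nbhd_pow vdeg_pos
      by (intro member_le_sum mult_nonneg_nonneg) (auto intro: less_imp_le)
    finally show ?thesis .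
  next
    case False
    then show ?thesis
      using dnorm_lazy_avg_iter_indicator[of k y] dnorm_nonneg by (simp add: supported_def)
  qed
  also have "\<dots> \<le> lazy_contraction ^ k * vdeg y"
    using dnorm_lazy_avg_iter_indicator by blast
  also have "\<dots> \<le> lazy_contraction ^ k * real \<Delta>"
    using lazy_contraction_bounds vdeg_le_Delta by (intro mult_left_mono) auto
  finally show ?thesis .
qed

lemma walk_prob_le: "walk_prob n x y \<le> real (2 * n + 1) * lazy_contraction ^ n * real \<Delta>"
proof -
  define L where "L = (lazy_avg ^^ (2 * n)) (indicator {y}) x"
  define C where "C = real ((2 * n) choose n)"
  have "C > 0" by (simp add: C_def)
  have "C / 4 ^ n * walk_prob n x y \<le> L"
    using binomial_le_lazy_avg_iter[of "indicator {y}" "2 * n" n x]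
    by (simp add: L_def C_def walk_prob_def power_mult)
  then have "C * walk_prob n x y \<le> 4 ^ n * L"
    by (simp add: field_simps)
  also have "\<dots> \<le> real (2 * n + 1) * C * L"
    using four_pow_le_central_binomial[of n] lazy_avg_iter_nonneg[of "indicator {y}"]
    by (intro mult_right_mono) (auto simp: L_def C_def)
  finally have "walk_prob n x y \<le> real (2 * n + 1) * L"
    using \<open>C > 0\<close> by (simp add: mult.commute mult.left_commute)
  also have "\<dots> \<le> real (2 * n + 1) * (lazy_contraction ^ n * real \<Delta>)"
  proof (rule mult_left_mono[OF power2_le_imp_le])
    have "L\<^sup>2 \<le> lazy_contraction ^ (2 * n) * real \<Delta>"
      unfolding L_def by (rule lazy_avg_iter_indicator_sq_le)
    also have "\<dots> \<le> lazy_contraction ^ (2 * n) * (real \<Delta>)\<^sup>2"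
      using lazy_contraction_bounds Delta_ge_1 by (intro mult_left_mono) (auto simp: power2_eq_square)
    also have "\<dots> = (lazy_contraction ^ n * real \<Delta>)\<^sup>2"
      by (simp add: power_even_eq power_mult_distrib)
    finally show "L\<^sup>2 \<le> (lazy_contraction ^ n * real \<Delta>)\<^sup>2" .
  qed (use lazy_contraction_bounds in simp_all)
  finally show ?thesis by (simp add: mult.assoc)
qed

lemma weighted_walk_sum_le_tail:
  assumes "0 \<le> q" "q * lazy_contraction \<le> \<theta>" "\<theta> < 1"
  shows "(\<Sum>k\<le>n. q ^ k * walk_prob k x y) \<le> real \<Delta> * (\<Sum>i. lin_geom \<theta> (i + gdist E x y))"
proof -
  let ?d = "gdist E x y"
  have "0 \<le> q * lazy_contraction"
    using assms lazy_contraction_bounds by simp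
  have "(\<Sum>k\<le>n. q ^ k * walk_prob k x y) = (\<Sum>k = ?d..n. q ^ k * walk_prob k x y)"
    by (rule sum.mono_neutral_right) (auto simp: walk_prob_below_gdist)
  also have "\<dots> \<le> (\<Sum>k = ?d..n. real \<Delta> * lin_geom \<theta> k)"
  proof (rule sum_mono)
    fix k
    have "q ^ k * walk_prob k x y \<le> q ^ k * (real (2 * k + 1) * lazy_contraction ^ k * real \<Delta>)"
      using assms walk_prob_le by (intro mult_left_mono) auto
    also have "\<dots> = real \<Delta> * (real (2 * k + 1) * (q * lazy_contraction) ^ k)"
      by (simp add: power_mult_distrib algebra_simps)
    also have "\<dots> \<le> real \<Delta> * lin_geom \<theta> k"
      unfolding lin_geom_def using assms \<open>0 \<le> q * lazy_contraction\<close>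
      by (intro mult_left_mono power_mono) auto
    finally show "q ^ k * walk_prob k x y \<le> real \<Delta> * lin_geom \<theta> k" .
  qed
  also have "\<dots> \<le> real \<Delta> * (\<Sum>i. lin_geom \<theta> (i + ?d))"
    unfolding sum_distrib_left[symmetric]
    using assms \<open>0 \<le> q * lazy_contraction\<close>
    by (intro mult_left_mono sum_le_suminf_shift summable_lin_geom) (auto simp: lin_geom_def)
  finally show ?thesis .
qed

lemma hit_prob_le_tail:
  assumes "0 < u" "6 * u * (real \<Delta>)\<^sup>2 \<le> 1 - lazy_contraction"
  shows "hit_prob E \<Delta> u x y
    \<le> 3 * u * (real \<Delta>)\<^sup>2 * real \<Delta>
       * (\<Sum>i. lin_geom ((1 + lazy_contraction) / 2) (i + gdist E x y))"
proof -
  define r where "r = u * (real \<Delta>)\<^sup>2"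
  have "0 < r" using assms(1) Delta_ge_1 by (simp add: r_def)
  have "r * lazy_contraction \<le> r"
    using lazy_contraction_bounds \<open>0 < r\<close> by (intro mult_left_le) auto
  have "(1 + 3 * r) * lazy_contraction = lazy_contraction + 3 * (r * lazy_contraction)"
    by (simp add: algebra_simps)
  also have "\<dots> \<le> lazy_contraction + 3 * r"
    using \<open>r * lazy_contraction \<le> r\<close> by simp
  also have "\<dots> \<le> (1 + lazy_contraction) / 2"
    using assms(2) by (simp add: r_def)
  finally have rate: "(1 + 3 * r) * lazy_contraction \<le> (1 + lazy_contraction) / 2" .
  define tail where "tail = (\<Sum>i. lin_geom ((1 + lazy_contraction) / 2) (i + gdist E x y))"
  have "measure_pmf.prob (bforest E r n x) {F. \<exists>c\<in>set F. visits y c} \<le> 3 * r * (real \<Delta> * tail)"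
    for n
  proof -
    have "measure_pmf.prob (bforest E r n x) {F. \<exists>c\<in>set F. visits y c}
        \<le> 3 * r * (\<Sum>k\<le>n. (1 + 3 * r) ^ k * walk_prob k x y)"
      by (rule hit_prob_forest_le[OF \<open>0 < r\<close>])
    also have "\<dots> \<le> 3 * r * (real \<Delta> * tail)"
      unfolding tail_def using \<open>0 < r\<close> rate lazy_contraction_bounds
      by (intro mult_left_mono weighted_walk_sum_le_tail) auto
    finally show ?thesis .
  qed
  then show ?thesis
    unfolding hit_prob_def r_def tail_def by (intro cSUP_least) (auto simp: mult.assoc)
qed

lemma hit_prob_vanishes_far:
  "\<exists>u0 > 0. \<forall>x u. 0 < u \<and> u < u0 \<longrightarrow>
     (\<forall>\<epsilon> > 0. \<exists>R. \<forall>y. gdist E x y > R \<longrightarrow> hit_prob E \<Delta> u x y < \<epsilon>)"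
proof (intro exI[of _ "(1 - lazy_contraction) / (6 * (real \<Delta>)\<^sup>2)"] conjI allI impI)
  show "0 < (1 - lazy_contraction) / (6 * (real \<Delta>)\<^sup>2)"
    using lazy_contraction_bounds Delta_ge_1 by simp
  fix x and u \<epsilon> :: real
  assume u: "0 < u \<and> u < (1 - lazy_contraction) / (6 * (real \<Delta>)\<^sup>2)" and "0 < \<epsilon>"
  define M where "M = 3 * u * (real \<Delta>)\<^sup>2 * real \<Delta>"
  have "0 < M" using u Delta_ge_1 by (simp add: M_def)
  have "summable (lin_geom ((1 + lazy_contraction) / 2))"
    using lazy_contraction_bounds by (intro summable_lin_geom) auto
  then obtain R where R: "\<forall>d\<ge>R. norm (\<Sum>i. lin_geom ((1 + lazy_contraction) / 2) (i + d)) < \<epsilon> / M"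
    using suminf_exist_split[OF divide_pos_pos[OF \<open>0 < \<epsilon>\<close> \<open>0 < M\<close>]] by blast
  show "\<exists>R. \<forall>y. R < gdist E x y \<longrightarrow> hit_prob E \<Delta> u x y < \<epsilon>"
  proof (intro exI[of _ R] allI impI)
    fix y assume "R < gdist E x y"
    have "6 * u * (real \<Delta>)\<^sup>2 \<le> 1 - lazy_contraction"
      using u Delta_ge_1 by (simp add: field_simps)
    then have "hit_prob E \<Delta> u x y \<le> M * (\<Sum>i. lin_geom ((1 + lazy_contraction) / 2) (i + gdist E x y))"
      using u by (simp add: M_def hit_prob_le_tail)
    also have "\<dots> < M * (\<epsilon> / M)"
      using R[rule_format, of "gdist E x y"] \<open>R < gdist E x y\<close> \<open>0 < M\<close>
      by (intro mult_strict_left_mono) auto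
    finally show "hit_prob E \<Delta> u x y < \<epsilon>"
      using \<open>0 < M\<close> by simp
  qed
qed

end

lemma connected_infinite_nbrs_nonempty:
  fixes E :: "'v \<Rightarrow> 'v \<Rightarrow> bool"
  assumes "connected_graph E" "infinite (UNIV :: 'v set)"
  shows "nbrs E v \<noteq> {}"
proof -
  obtain y :: 'v where "y \<noteq> v"
    using assms(2) by (metis finite.simps UNIV_eq_I singletonI)
  obtain p where p: "is_walk E p" "hd p = v" "last p = y"
    using assms(1) unfolding connected_graph_def by blast
  then obtain a b q where "p = a # b # q"
    using \<open>y \<noteq> v\<close> by (cases p; cases "tl p") (auto simp: is_walk_def)
  then have "E v b"
    using p by (auto simp: is_walk_def)
  then show ?thesis by (auto simp: nbrs_def)
qed

lemma non_amenable_isoperimetric: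
  fixes E :: "'v \<Rightarrow> 'v \<Rightarrow> bool"
  assumes "non_amenable E"
  obtains h :: real where "0 < h"
    "\<And>K. finite K \<Longrightarrow> K \<noteq> {} \<Longrightarrow> h * real (card K) \<le> real (card (vboundary E K))"
proof
  let ?h = "INF K \<in> {K. finite K \<and> K \<noteq> {}}. real (card (vboundary E K)) / real (card K)"
  show "0 < ?h" using assms by (simp add: non_amenable_def)
  fix K :: "'v set" assume "finite K" "K \<noteq> {}"
  have "?h \<le> real (card (vboundary E K)) / real (card K)"
    by (rule cINF_lower) (use \<open>finite K\<close> \<open>K \<noteq> {}\<close> in \<open>auto intro: bdd_belowI[of _ 0]\<close>)
  then show "?h * real (card K) \<le> real (card (vboundary E K))"
    using \<open>finite K\<close> \<open>K \<noteq> {}\<close> by (simp add: pos_le_divide_eq card_gt_0_iff)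
qed

theorem proposition6p2:
  fixes E :: "'v \<Rightarrow> 'v \<Rightarrow> bool" and \<Delta> :: nat
  assumes sym: "\<And>v w. E v w \<Longrightarrow> E w v"
    and irrefl: "\<And>v. \<not> E v v"
    and inf: "infinite (UNIV :: 'v set)"
    and conn: "connected_graph E"
    and nonam: "non_amenable E"
    and deg: "\<And>v. finite (nbrs E v) \<and> card (nbrs E v) \<le> \<Delta>"
  shows "\<exists>u0 > 0. \<forall>x u. 0 < u \<and> u < u0 \<longrightarrow>
           (\<forall>\<epsilon> > 0. \<exists>R. \<forall>y. gdist E x y > R \<longrightarrow> hit_prob E \<Delta> u x y < \<epsilon>)"
proof -
  obtain h where h: "0 < h"
    "\<And>K. finite K \<Longrightarrow> K \<noteq> {} \<Longrightarrow> h * real (card K) \<le> real (card (vboundary E K))"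
    using non_amenable_isoperimetric[OF nonam] by blast
  interpret nonamenable_graph E \<Delta> h
    using sym deg connected_infinite_nbrs_nonempty[OF conn inf] h
    by unfold_locales auto
  show ?thesis by (rule hit_prob_vanishes_far)
qed

end
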